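(* The only $F$-norm $\|\cdot\|_F$ on $\mathbb{R}^{d+1}$ satisfying $\|\cdot\|_F*\|\cdot\|_F=\|\cdot\|_F$ is the sup-norm $\|\mathbf{x}\|_\infty=\max_{0\le i\le d}|x_i|$.
   Context: Condition $(\mathcal{H})$ on a random vector $\mathbf{X}=(X_1,\dots,X_d)$: each $X_i$ is almost surely nonnegative with $0<E(X_i)<\infty$. For such $\mathbf{X}$ with distribution function $F$, the $F$-norm is $\|\mathbf{x}\|_F=E(\max(|x_0|,|x_1|X_1,\dots,|x_d|X_d))$, $\mathbf{x}\in\mathbb{R}^{d+1}$; an $F$-norm is any norm on $\mathbb{R}^{d+1}$ of this form. The product $\|\cdot\|_F*\|\cdot\|_G$ is the $F$-norm generated by $(X_1Y_1,\dots,X_dY_d)$ where $\mathbf{X}\sim F$ and $\mathbf{Y}\sim G$ are independent and satisfy $(\mathcal{H})$. *)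

theory Defs
  imports "HOL-Probability.Probability"
begin

text \<open>A random vector (X_1,...,X_d) is represented by its distribution P, a measure on
  the product space of functions indexed by {1..d}. A point of R^(d+1) is a function
  x :: nat => real of which only the values x 0, ..., x d matter.\<close>

definition vec_space :: "nat \<Rightarrow> (nat \<Rightarrow> real) measure" where
  "vec_space d = PiM {1..d} (\<lambda>_. borel)"

definition cond_H :: "nat \<Rightarrow> (nat \<Rightarrow> real) measure \<Rightarrow> bool" where
  "cond_H d P \<longleftrightarrow> prob_space P \<and> sets P = sets (vec_space d) \<and>
     (\<forall>i\<in>{1..d}. (AE z in P. 0 \<le> z i) \<and> integrable P (\<lambda>z. z i) \<and>
                   0 < (\<integral>z. z i \<partial>P))"

definition F_norm :: "nat \<Rightarrow> (nat \<Rightarrow> real) measure \<Rightarrow> (nat \<Rightarrow> real) \<Rightarrow> real" where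
  "F_norm d P x = (\<integral>z. Max (insert \<bar>x 0\<bar> ((\<lambda>i. \<bar>x i\<bar> * z i) ` {1..d})) \<partial>P)"

definition prod_dist :: "nat \<Rightarrow> (nat \<Rightarrow> real) measure \<Rightarrow> (nat \<Rightarrow> real) measure \<Rightarrow> (nat \<Rightarrow> real) measure" where
  "prod_dist d P Q = distr (P \<Otimes>\<^sub>M Q) (vec_space d) (\<lambda>(z, w). restrict (\<lambda>i. z i * w i) {1..d})"

definition sup_norm :: "nat \<Rightarrow> (nat \<Rightarrow> real) \<Rightarrow> real" where
  "sup_norm d x = Max ((\<lambda>i. \<bar>x i\<bar>) ` {0..d})"

end

theory Submission
  imports Defs
begin

text \<open>
  If X_1, ..., X_d are almost surely 1, both F-norms are the sup-norm. Conversely, testing either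
  identity on the vectors t e_0 + e_i reduces it to a statement about one coordinate X = X_i.
  The identity F = sup-norm gives E X = 1 and E max(1, X) = 1, so X <= 1 a.s. and hence X = 1 a.s.
  The identity F * F = F gives E max(t, X Y) = E max(t, X) for all t >= 0, with Y an independent
  copy of X. At t = 0 this reads (E X)^2 = E X, so E X = 1. By Jensen, E_Y max(t, x Y) >= max(t, x),
  so equality of the expectations forces E_Y max(t, x Y) = max(t, x) for almost every x,
  simultaneously for all rational t. For one such x > 0 and rational t > x this says x Y <= t a.s.;
  hence Y <= 1 a.s., and together with E Y = 1 we get Y = 1 a.s.
\<close>

lemma AE_eq_if_nn_integral_mono_eq:
  fixes f g :: "'a \<Rightarrow> ennreal"
  assumes [measurable]: "f \<in> borel_measurable M" "g \<in> borel_measurable M"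
    and le: "AE x in M. f x \<le> g x"
    and eq: "(\<integral>\<^sup>+x. g x \<partial>M) = (\<integral>\<^sup>+x. f x \<partial>M)" and fin: "(\<integral>\<^sup>+x. f x \<partial>M) \<noteq> \<infinity>"
  shows "AE x in M. f x = g x"
proof -
  have "(\<integral>\<^sup>+x. g x - f x \<partial>M) = (\<integral>\<^sup>+x. g x \<partial>M) - (\<integral>\<^sup>+x. f x \<partial>M)"
    using fin le by (intro nn_integral_diff) auto
  also have "\<dots> = 0"
    using eq fin by (simp add: ennreal_minus_eq_0 less_top)
  finally have "AE x in M. g x - f x = 0"
    by (simp add: nn_integral_0_iff_AE)
  with le show ?thesis
    by eventually_elim (metis ennreal_minus_eq_0 order.antisym)
qed

lemma ennreal_max_eq_add_excess:
  assumes "0 \<le> c"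
  shows "ennreal (max c a) = ennreal c + ennreal (a - c)"
  using assms by (cases "a \<le> c") (auto simp: ennreal_neg simp flip: ennreal_plus)

context prob_space
begin

lemma AE_eq_if_AE_le_expectation_eq:
  fixes f :: "'a \<Rightarrow> real"
  assumes "integrable M f" and "AE x in M. f x \<le> c" and "expectation f = c"
  shows "AE x in M. f x = c"
  using integral_eq_mono_AE_eq_AE[where g="\<lambda>_. c"] assms by (simp add: prob_space)

lemma AE_le_if_nn_integral_max_eq:
  fixes g :: "'a \<Rightarrow> real"
  assumes [measurable]: "g \<in> borel_measurable M" and "0 \<le> c"
    and eq: "(\<integral>\<^sup>+x. ennreal (max c (g x)) \<partial>M) = ennreal c"
  shows "AE x in M. g x \<le> c"
proof -
  have "ennreal c + (\<integral>\<^sup>+x. ennreal (g x - c) \<partial>M) = (\<integral>\<^sup>+x. ennreal (max c (g x)) \<partial>M)"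
    using \<open>0 \<le> c\<close> by (simp add: ennreal_max_eq_add_excess nn_integral_add emeasure_space_1)
  then have "(\<integral>\<^sup>+x. ennreal (g x - c) \<partial>M) = 0"
    unfolding eq using ennreal_add_left_cancel[of "ennreal c" _ 0] by simp
  then have "AE x in M. ennreal (g x - c) = 0"
    by (simp add: nn_integral_0_iff_AE)
  then show ?thesis
    by eventually_elim (simp add: ennreal_eq_0_iff)
qed

lemma max_le_nn_integral_max_mult:
  fixes f :: "'a \<Rightarrow> real"
  assumes [measurable]: "f \<in> borel_measurable M" and mean: "(\<integral>\<^sup>+y. ennreal (f y) \<partial>M) = 1"
    and "0 \<le> t" and "0 \<le> a"
  shows "ennreal (max t a) \<le> (\<integral>\<^sup>+y. ennreal (max t (a * f y)) \<partial>M)"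
proof -
  have "ennreal t = (\<integral>\<^sup>+y. ennreal t \<partial>M)"
    by (simp add: emeasure_space_1)
  also have "\<dots> \<le> (\<integral>\<^sup>+y. ennreal (max t (a * f y)) \<partial>M)"
    by (intro nn_integral_mono) (simp add: ennreal_leI)
  finally have t: "ennreal t \<le> (\<integral>\<^sup>+y. ennreal (max t (a * f y)) \<partial>M)" .
  have "ennreal a = (\<integral>\<^sup>+y. ennreal (a * f y) \<partial>M)"
    using \<open>0 \<le> a\<close> by (simp add: ennreal_mult' nn_integral_cmult mean)
  also have "\<dots> \<le> (\<integral>\<^sup>+y. ennreal (max t (a * f y)) \<partial>M)"
    by (intro nn_integral_mono) (simp add: ennreal_leI)
  finally show ?thesis
    using t by (simp add: max_def)
qed

end

lemma (in pair_sigma_finite) integral_nonneg_eq_iterated_nn_integral: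
  assumes [measurable]: "h \<in> borel_measurable (M1 \<Otimes>\<^sub>M M2)" and "\<And>p. 0 \<le> h p"
  shows "integral\<^sup>L (M1 \<Otimes>\<^sub>M M2) h = enn2real (\<integral>\<^sup>+x. \<integral>\<^sup>+y. ennreal (h (x, y)) \<partial>M2 \<partial>M1)"
  using assms M2.nn_integral_fst[of "\<lambda>p. ennreal (h p)"] by (simp add: integral_eq_nn_integral)

locale max_product_invariant = prob_space +
  fixes f :: "'a \<Rightarrow> real"
  assumes integrable_f: "integrable M f"
    and nonneg: "AE x in M. 0 \<le> f x"
    and expectation_pos: "0 < expectation f"
    and invariant: "\<And>t. 0 \<le> t \<Longrightarrow>
      (\<integral>p. max t (f (fst p) * f (snd p)) \<partial>(M \<Otimes>\<^sub>M M)) = (\<integral>x. max t (f x) \<partial>M)"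
begin

definition inner_max :: "real \<Rightarrow> 'a \<Rightarrow> ennreal" where
  "inner_max t x = (\<integral>\<^sup>+y. ennreal (max t (f x * f y)) \<partial>M)"

lemma borel_measurable_f[measurable]: "f \<in> borel_measurable M"
  using integrable_f by (rule borel_measurable_integrable)

lemma borel_measurable_inner_max[measurable]: "inner_max t \<in> borel_measurable M"
  unfolding inner_max_def by measurable

lemma nn_integral_max_eq_integral:
  "0 \<le> t \<Longrightarrow> (\<integral>\<^sup>+x. ennreal (max t (f x)) \<partial>M) = ennreal (\<integral>x. max t (f x) \<partial>M)"
  using integrable_f by (intro nn_integral_eq_integral) auto

lemma nn_integral_inner_max:
  assumes "0 \<le> t"
  shows "(\<integral>\<^sup>+x. inner_max t x \<partial>M) = (\<integral>\<^sup>+x. ennreal (max t (f x)) \<partial>M)"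
proof -
  interpret MM: pair_sigma_finite M M
    by unfold_locales
  have "expectation f \<le> (\<integral>x. max t (f x) \<partial>M)"
    using integrable_f by (intro integral_mono) auto
  with expectation_pos have max_pos: "0 < (\<integral>x. max t (f x) \<partial>M)"
    by linarith
  have "enn2real (\<integral>\<^sup>+x. inner_max t x \<partial>M) = (\<integral>x. max t (f x) \<partial>M)"
    using invariant[OF assms] assms
      MM.integral_nonneg_eq_iterated_nn_integral[of "\<lambda>p. max t (f (fst p) * f (snd p))"]
    unfolding inner_max_def by simp
  \<comment> \<open>Since enn2real maps \<infinity> to 0, positivity rules out an infinite iterated integral.\<close>
  with max_pos show ?thesis
    unfolding nn_integral_max_eq_integral[OF assms]
    by (metis enn2real_top ennreal_enn2real less_irrefl top.not_eq_extremum)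
qed

lemma nn_integral_f: "(\<integral>\<^sup>+y. ennreal (f y) \<partial>M) = ennreal (expectation f)"
  using integrable_f nonneg by (rule nn_integral_eq_integral)

lemma expectation_eq_1: "expectation f = 1"
proof -
  have "AE x in M. inner_max 0 x = ennreal (f x) * ennreal (expectation f)"
    using nonneg
    by eventually_elim (simp add: inner_max_def ennreal_mult' nn_integral_cmult nn_integral_f)
  then have "(\<integral>\<^sup>+x. inner_max 0 x \<partial>M) = ennreal (expectation f * expectation f)"
    using expectation_pos by (simp add: nn_integral_cong_AE nn_integral_multc nn_integral_f ennreal_mult)
  moreover have "(\<integral>\<^sup>+x. ennreal (max 0 (f x)) \<partial>M) = ennreal (expectation f)"
    by (simp add: nn_integral_f)
  ultimately have "expectation f * expectation f = expectation f"
    using nn_integral_inner_max[of 0] expectation_pos by simp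
  with expectation_pos show ?thesis
    by simp
qed

lemma AE_inner_max_eq:
  assumes "0 \<le> t"
  shows "AE x in M. ennreal (max t (f x)) = inner_max t x"
proof (rule AE_eq_if_nn_integral_mono_eq)
  have "ennreal (max t (f x)) \<le> inner_max t x" if "0 \<le> f x" for x
    unfolding inner_max_def using assms that nn_integral_f expectation_eq_1
    by (intro max_le_nn_integral_max_mult) auto
  with nonneg show "AE x in M. ennreal (max t (f x)) \<le> inner_max t x"
    by (auto elim: eventually_mono)
qed (use assms nn_integral_inner_max nn_integral_max_eq_integral in auto)

lemma exists_pos_inner_max_eq:
  "\<exists>x. 0 < f x \<and> (\<forall>q::rat. 0 \<le> q \<longrightarrow> ennreal (max (of_rat q) (f x)) = inner_max (of_rat q) x)"
proof (rule ccontr)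
  assume no_witness: "\<not> ?thesis"
  have "AE x in M. \<forall>q::rat. 0 \<le> q \<longrightarrow> ennreal (max (of_rat q) (f x)) = inner_max (of_rat q) x"
    by (auto simp: AE_all_countable intro!: AE_impI AE_inner_max_eq)
  with nonneg have "AE x in M. f x = 0"
    by eventually_elim (use no_witness in force)
  then have "expectation f = 0"
    by (rule integral_eq_zero_AE)
  with expectation_pos show False
    by simp
qed

lemma AE_le_1: "AE y in M. f y \<le> 1"
proof -
  obtain x where x_pos: "0 < f x"
    and inner_max_x: "\<And>q::rat. 0 \<le> q \<Longrightarrow> ennreal (max (of_rat q) (f x)) = inner_max (of_rat q) x"
    using exists_pos_inner_max_eq by blast
  have "AE y in M. f x * f y \<le> of_rat q" if "f x < of_rat q" for q :: rat
  proof -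
    have q_pos: "0 < (of_rat q :: real)"
      using that x_pos by linarith
    then have "(\<integral>\<^sup>+y. ennreal (max (of_rat q) (f x * f y)) \<partial>M) = ennreal (of_rat q)"
      using inner_max_x[of q] that by (simp add: inner_max_def max_absorb1)
    with q_pos show ?thesis
      by (intro AE_le_if_nn_integral_max_eq) auto
  qed
  then have "AE y in M. \<forall>q::rat. f x < of_rat q \<longrightarrow> f x * f y \<le> of_rat q"
    by (simp add: AE_all_countable AE_impI)
  then show ?thesis
  proof eventually_elim
    case (elim y)
    have "f x * f y \<le> f x"
    proof (rule ccontr)
      assume "\<not> f x * f y \<le> f x"
      then obtain q :: rat where "f x < of_rat q" "of_rat q < f x * f y"
        using of_rat_dense by (meson not_le)
      with elim show False
        by force
    qed
    with x_pos show ?case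
      by simp
  qed
qed

lemma AE_eq_1: "AE x in M. f x = 1"
  using integrable_f AE_le_1 expectation_eq_1 by (rule AE_eq_if_AE_le_expectation_eq)

end

definition axis_vec :: "nat \<Rightarrow> real \<Rightarrow> nat \<Rightarrow> real" where
  "axis_vec i t = (\<lambda>j. if j = 0 then t else if j = i then 1 else 0)"

lemma Max_axis_vec:
  assumes i: "i \<in> {1..d}" and t: "0 \<le> t"
  shows "Max (insert \<bar>axis_vec i t 0\<bar> ((\<lambda>j. \<bar>axis_vec i t j\<bar> * v j) ` {1..d})) = max t (v i)"
proof (rule Max_eqI)
  fix y
  assume "y \<in> insert \<bar>axis_vec i t 0\<bar> ((\<lambda>j. \<bar>axis_vec i t j\<bar> * v j) ` {1..d})"
  with t show "y \<le> max t (v i)"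
    by (auto simp: axis_vec_def)
next
  show "max t (v i) \<in> insert \<bar>axis_vec i t 0\<bar> ((\<lambda>j. \<bar>axis_vec i t j\<bar> * v j) ` {1..d})"
    using i t by (auto simp: axis_vec_def max_def image_iff intro!: bexI[of _ i])
qed simp

lemma sup_norm_eq_Max_insert: "sup_norm d x = Max (insert \<bar>x 0\<bar> ((\<lambda>i. \<bar>x i\<bar>) ` {1..d}))"
proof -
  have "{0..d} = insert 0 {1..d}"
    by auto
  then show ?thesis
    unfolding sup_norm_def by simp
qed

lemma sup_norm_axis_vec: "i \<in> {1..d} \<Longrightarrow> 0 \<le> t \<Longrightarrow> sup_norm d (axis_vec i t) = max t 1"
  using Max_axis_vec[of i d t "\<lambda>_. 1"] by (simp add: sup_norm_eq_Max_insert)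

lemma F_norm_axis_vec:
  assumes "i \<in> {1..d}" and "0 \<le> t"
  shows "F_norm d P (axis_vec i t) = (\<integral>z. max t (z i) \<partial>P)"
  by (simp only: F_norm_def Max_axis_vec[OF assms])

lemma borel_measurable_F_norm_integrand:
  "(\<lambda>z. Max (insert \<bar>x 0\<bar> ((\<lambda>i. \<bar>x i\<bar> * z i) ` {1..d}))) \<in> borel_measurable (vec_space d)"
proof -
  have "insert \<bar>x 0\<bar> ((\<lambda>i. \<bar>x i\<bar> * z i) ` {1..d}) = (\<lambda>j. \<bar>x j\<bar> * (if j = 0 then 1 else z j)) ` {0..d}" for z
  proof -
    have "{0..d} = insert 0 {1..d}"
      by auto
    then show ?thesis
      by (auto intro!: image_cong)
  qed
  moreover have "(\<lambda>z. \<bar>x j\<bar> * (if j = 0 then 1 else z j)) \<in> borel_measurable (vec_space d)" if "j \<in> {0..d}" for j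
    using that by (cases "j = 0") (auto simp: vec_space_def)
  ultimately show ?thesis
    by (simp add: borel_measurable_Max)
qed

lemma measurable_coordinatewise_mult:
  assumes "sets P = sets (vec_space d)" and "sets Q = sets (vec_space d)"
  shows "(\<lambda>(z, w). restrict (\<lambda>i. z i * w i) {1..d}) \<in> P \<Otimes>\<^sub>M Q \<rightarrow>\<^sub>M vec_space d"
  unfolding measurable_cong_sets[OF sets_pair_measure_cong[OF assms] refl]
  unfolding vec_space_def case_prod_beta by measurable

lemma sets_prod_dist: "sets (prod_dist d P Q) = sets (vec_space d)"
  by (simp add: prod_dist_def)

lemma prob_space_prod_dist:
  assumes "prob_space P" "prob_space Q" "sets P = sets (vec_space d)" "sets Q = sets (vec_space d)"
  shows "prob_space (prod_dist d P Q)"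
  unfolding prod_dist_def
  using assms measurable_coordinatewise_mult[OF assms(3,4)]
  by (intro prob_space.prob_space_distr prob_space_pair) auto

lemma F_norm_prod_dist_axis_vec:
  assumes "sets P = sets (vec_space d)" "sets Q = sets (vec_space d)" and i: "i \<in> {1..d}" and "0 \<le> t"
  shows "F_norm d (prod_dist d P Q) (axis_vec i t) = (\<integral>p. max t (fst p i * snd p i) \<partial>(P \<Otimes>\<^sub>M Q))"
proof -
  have "(\<lambda>z. max t (z i)) \<in> borel_measurable (vec_space d)"
    using i unfolding vec_space_def by measurable
  with i show ?thesis
    using \<open>0 \<le> t\<close> measurable_coordinatewise_mult[OF assms(1,2)]
    by (simp add: F_norm_axis_vec prod_dist_def integral_distr case_prod_beta)
qed

lemma F_norm_eq_sup_norm_if_AE_eq_1: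
  assumes "prob_space P" "sets P = sets (vec_space d)" and ones: "AE z in P. \<forall>i\<in>{1..d}. z i = 1"
  shows "F_norm d P x = sup_norm d x"
proof -
  have "F_norm d P x = (\<integral>z. sup_norm d x \<partial>P)"
    unfolding F_norm_def
  proof (rule integral_cong_AE)
    show "AE z in P. Max (insert \<bar>x 0\<bar> ((\<lambda>i. \<bar>x i\<bar> * z i) ` {1..d})) = sup_norm d x"
      using ones
    proof eventually_elim
      case (elim z)
      then have "(\<lambda>i. \<bar>x i\<bar> * z i) ` {1..d} = (\<lambda>i. \<bar>x i\<bar>) ` {1..d}"
        by (intro image_cong) auto
      then show ?case
        by (simp add: sup_norm_eq_Max_insert)
    qed
  qed (simp_all only: measurable_cong_sets[OF assms(2) refl] borel_measurable_F_norm_integrand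
      borel_measurable_const)
  with \<open>prob_space P\<close> show ?thesis
    by (simp add: prob_space.prob_space)
qed

lemma AE_prod_dist_eq_1:
  assumes "prob_space P" "prob_space Q" and sets: "sets P = sets (vec_space d)" "sets Q = sets (vec_space d)"
    and "AE z in P. \<forall>i\<in>{1..d}. z i = 1" "AE w in Q. \<forall>i\<in>{1..d}. w i = 1"
  shows "AE v in prod_dist d P Q. \<forall>i\<in>{1..d}. v i = 1"
proof -
  interpret pair_prob_space P Q
    using assms by (simp add: pair_prob_space_def pair_sigma_finite_def prob_space_imp_sigma_finite)
  let ?T = "\<lambda>(z, w). restrict (\<lambda>i. z i * w i) {1..d}"
  have ones_pred: "Measurable.pred (vec_space d) (\<lambda>v. \<forall>i\<in>{1..d}. v i = 1)"
    unfolding vec_space_def by measurable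
  have "AE p in P \<Otimes>\<^sub>M Q. \<forall>i\<in>{1..d}. ?T p i = 1"
  proof (rule AE_pair_measure)
    show "{p \<in> space (P \<Otimes>\<^sub>M Q). \<forall>i\<in>{1..d}. ?T p i = 1} \<in> sets (P \<Otimes>\<^sub>M Q)"
      using measurable_compose[OF measurable_coordinatewise_mult[OF sets] ones_pred]
      by (simp add: pred_def)
  qed (use assms(5,6) in \<open>auto elim!: eventually_mono\<close>)
  then show ?thesis
    unfolding prod_dist_def using measurable_coordinatewise_mult[OF sets] ones_pred
    by (simp add: AE_distr_iff pred_def)
qed

lemma AE_coordinate_eq_1_if_F_norm_idempotent:
  assumes H: "cond_H d P" and idem: "\<forall>x. F_norm d (prod_dist d P P) x = F_norm d P x"
    and i: "i \<in> {1..d}"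
  shows "AE z in P. z i = 1"
proof -
  from H i have "prob_space P" and sets: "sets P = sets (vec_space d)"
    and "integrable P (\<lambda>z. z i)" "AE z in P. 0 \<le> z i" "0 < (\<integral>z. z i \<partial>P)"
    by (auto simp: cond_H_def)
  moreover have "(\<integral>p. max t (fst p i * snd p i) \<partial>(P \<Otimes>\<^sub>M P)) = (\<integral>z. max t (z i) \<partial>P)"
    if "0 \<le> t" for t
    using idem[rule_format, of "axis_vec i t"] F_norm_axis_vec[OF i that, of P]
      F_norm_prod_dist_axis_vec[OF sets sets i that] by simp
  ultimately interpret max_product_invariant P "\<lambda>z. z i"
    by (intro max_product_invariant.intro max_product_invariant_axioms.intro)
  show ?thesis
    by (rule AE_eq_1)
qed

lemma AE_coordinate_eq_1_if_F_norm_eq_sup_norm: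
  assumes H: "cond_H d P" and sup: "\<forall>x. F_norm d P x = sup_norm d x" and i: "i \<in> {1..d}"
  shows "AE z in P. z i = 1"
proof -
  from H i have "prob_space P" and nonneg: "AE z in P. 0 \<le> z i" and int: "integrable P (\<lambda>z. z i)"
    by (auto simp: cond_H_def)
  interpret prob_space P
    by fact
  have F_norm_axis: "(\<integral>z. max t (z i) \<partial>P) = max t 1" if "0 \<le> t" for t
    using sup[rule_format, of "axis_vec i t"] F_norm_axis_vec[OF i that, of P] sup_norm_axis_vec[OF i that]
    by simp
  have "(\<integral>z. z i \<partial>P) = (\<integral>z. max 0 (z i) \<partial>P)"
    using nonneg int by (intro integral_cong_AE) auto
  with F_norm_axis[of 0] have mean_1: "(\<integral>z. z i \<partial>P) = 1"
    by simp
  have "(\<integral>\<^sup>+z. ennreal (max 1 (z i)) \<partial>P) = ennreal (\<integral>z. max 1 (z i) \<partial>P)"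
    using int by (intro nn_integral_eq_integral) auto
  with F_norm_axis[of 1] have "AE z in P. z i \<le> 1"
    using int by (intro AE_le_if_nn_integral_max_eq) auto
  then show ?thesis
    by (rule AE_eq_if_AE_le_expectation_eq[OF int _ mean_1])
qed

theorem proposition4p7:
  fixes d :: nat and P :: "(nat \<Rightarrow> real) measure"
  assumes "cond_H d P"
  shows "(\<forall>x. F_norm d (prod_dist d P P) x = F_norm d P x)
         \<longleftrightarrow> (\<forall>x. F_norm d P x = sup_norm d x)"
proof -
  from assms have P: "prob_space P" "sets P = sets (vec_space d)"
    by (auto simp: cond_H_def)
  let ?ones = "\<lambda>Q. AE z in Q. \<forall>i\<in>{1..d}. z i = 1"
  show ?thesis
  proof
    assume idem: "\<forall>x. F_norm d (prod_dist d P P) x = F_norm d P x"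
    have "?ones P"
      by (intro AE_finite_allI AE_coordinate_eq_1_if_F_norm_idempotent[OF assms idem]) simp_all
    with P show "\<forall>x. F_norm d P x = sup_norm d x"
      by (simp add: F_norm_eq_sup_norm_if_AE_eq_1)
  next
    assume sup: "\<forall>x. F_norm d P x = sup_norm d x"
    have "?ones P"
      by (intro AE_finite_allI AE_coordinate_eq_1_if_F_norm_eq_sup_norm[OF assms sup]) simp_all
    with P have "?ones (prod_dist d P P)"
      by (intro AE_prod_dist_eq_1) auto
    with \<open>?ones P\<close> P show "\<forall>x. F_norm d (prod_dist d P P) x = F_norm d P x"
      by (simp add: F_norm_eq_sup_norm_if_AE_eq_1 prob_space_prod_dist sets_prod_dist)
  qed
qed

end
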